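(* Let $P$ be a 6-stack and let $Q$ be a retract of $P$ which (with the induced order) is isomorphic to a tower of sections. If there is an integer $i\ge 0$ with $\emptyset\ne P(i)\subseteq Q$, then $Q=P$.
   Context: All posets are finite. For a poset $P$ and $p\in P$, the rank $r(p)$ of $p$ is the largest $m$ such that there is a chain $p_0<\dots<p_m=p$ in $P$. $P$ is ranked of rank $r(P)$ if every maximal chain has exactly $r(P)+1$ elements. For $0\le i\le j$, $P(i,j)=\{p\in P:i\le r(p)\le j\}$, $P(i)=P(i,i)$ (induced order). A subset $Q\subseteq P$ (induced order) is a retract of $P$ if there is an order-preserving $f:P\to Q$ with $f(q)=q$ for all $q\in Q$. The 6-crown $C_6$ is the poset on $\{x_0,x_1,x_2,y_0,y_1,y_2\}$ whose only strict comparabilities are $x_0<y_0>x_1<y_1>x_2<y_2>x_0$. A 6-stack is a ranked poset $P$ of rank $n\ge1$ such that $P(i,i+1)\cong C_6$ for each $0\le i<n$. The ordinal sum of posets $P_1,\dots,P_k$ ($k\ge1$) is their disjoint union ordered by the orders of the $P_i$ together with $p<q$ whenever $p\in P_i,q\in P_j,i<j$. A section is either a two-element antichain or a poset on the set $\{[i,k]: 0\le i\le 2,\ 0\le k\le n\}$ (with $3(n+1)$ distinct elements), for some $n\ge 1$, such that: (1) $[i,k]<[i,l]$ whenever $0\le k<l\le n$; (2) for each $k$, $\{[0,k],[1,k],[2,k]\}$ is an antichain; (3) $[i,k]<[j,l]$ implies $[i+1,k]<[j+1,l]$ (first indices mod $3$); (4) for each $0\le k<n$ there are $i,j$ with $[i,k]\not<[j,k+1]$.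 A tower of sections is an ordinal sum of one or more sections. *)

theory Defs
  imports Main
begin

definition strict_poset :: "'a set \<Rightarrow> ('a \<Rightarrow> 'a \<Rightarrow> bool) \<Rightarrow> bool" where
  "strict_poset P lt \<longleftrightarrow>
     (\<forall>x\<in>P. \<not> lt x x) \<and> (\<forall>x\<in>P. \<forall>y\<in>P. \<forall>z\<in>P. lt x y \<longrightarrow> lt y z \<longrightarrow> lt x z)"

definition fin_poset :: "'a set \<Rightarrow> ('a \<Rightarrow> 'a \<Rightarrow> bool) \<Rightarrow> bool" where
  "fin_poset P lt \<longleftrightarrow> finite P \<and> strict_poset P lt"

definition rank :: "'a set \<Rightarrow> ('a \<Rightarrow> 'a \<Rightarrow> bool) \<Rightarrow> 'a \<Rightarrow> nat" where
  "rank P lt p = Max {length xs - 1 | xs. xs \<noteq> [] \<and> set xs \<subseteq> P \<and> sorted_wrt lt xs \<and> last xs = p}"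

definition is_chain :: "'a set \<Rightarrow> ('a \<Rightarrow> 'a \<Rightarrow> bool) \<Rightarrow> 'a set \<Rightarrow> bool" where
  "is_chain P lt C \<longleftrightarrow> C \<subseteq> P \<and> (\<forall>x\<in>C. \<forall>y\<in>C. x = y \<or> lt x y \<or> lt y x)"

definition maximal_chain :: "'a set \<Rightarrow> ('a \<Rightarrow> 'a \<Rightarrow> bool) \<Rightarrow> 'a set \<Rightarrow> bool" where
  "maximal_chain P lt C \<longleftrightarrow> is_chain P lt C \<and> (\<forall>D. is_chain P lt D \<and> C \<subseteq> D \<longrightarrow> D = C)"

definition ranked_of_rank :: "'a set \<Rightarrow> ('a \<Rightarrow> 'a \<Rightarrow> bool) \<Rightarrow> nat \<Rightarrow> bool" where
  "ranked_of_rank P lt n \<longleftrightarrow> (\<forall>C. maximal_chain P lt C \<longrightarrow> card C = n + 1)"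

definition levels :: "'a set \<Rightarrow> ('a \<Rightarrow> 'a \<Rightarrow> bool) \<Rightarrow> nat \<Rightarrow> nat \<Rightarrow> 'a set" where
  "levels P lt i j = {p \<in> P. i \<le> rank P lt p \<and> rank P lt p \<le> j}"

abbreviation level :: "'a set \<Rightarrow> ('a \<Rightarrow> 'a \<Rightarrow> bool) \<Rightarrow> nat \<Rightarrow> 'a set" where
  "level P lt i \<equiv> levels P lt i i"

definition order_iso :: "'a set \<Rightarrow> ('a \<Rightarrow> 'a \<Rightarrow> bool) \<Rightarrow> 'b set \<Rightarrow> ('b \<Rightarrow> 'b \<Rightarrow> bool) \<Rightarrow> bool" where
  "order_iso A ltA B ltB \<longleftrightarrow>
     (\<exists>f. bij_betw f A B \<and> (\<forall>x\<in>A. \<forall>y\<in>A. ltA x y \<longleftrightarrow> ltB (f x) (f y)))"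

text \<open>The 6-crown on {0..5}: x_i = i, y_i = 3 + i;
  x0<y0>x1<y1>x2<y2>x0.\<close>
definition crown6 :: "nat set" where "crown6 = {0..5}"

definition crown6_lt :: "nat \<Rightarrow> nat \<Rightarrow> bool" where
  "crown6_lt a b \<longleftrightarrow> (a, b) \<in> {(0,3), (1,3), (1,4), (2,4), (2,5), (0,5)}"

definition six_stack :: "'a set \<Rightarrow> ('a \<Rightarrow> 'a \<Rightarrow> bool) \<Rightarrow> bool" where
  "six_stack P lt \<longleftrightarrow> fin_poset P lt \<and>
     (\<exists>n\<ge>1. ranked_of_rank P lt n \<and>
        (\<forall>i<n. order_iso (levels P lt i (i+1)) lt crown6 crown6_lt))"

definition retract :: "'a set \<Rightarrow> ('a \<Rightarrow> 'a \<Rightarrow> bool) \<Rightarrow> 'a set \<Rightarrow> bool" where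
  "retract P lt Q \<longleftrightarrow> Q \<subseteq> P \<and>
     (\<exists>f. (\<forall>x\<in>P. f x \<in> Q) \<and>
          (\<forall>x\<in>P. \<forall>y\<in>P. lt x y \<longrightarrow> (f x = f y \<or> lt (f x) (f y))) \<and>
          (\<forall>q\<in>Q. f q = q))"

text \<open>Sections. A section is a two-element antichain, or a poset on
  {[i,k] : 0 \<le> i \<le> 2, 0 \<le> k \<le> n} (here [i,k] = (i,k)) for some n \<ge> 1 with (1)-(4).\<close>
definition is_section :: "(nat \<times> nat) set \<Rightarrow> ((nat \<times> nat) \<Rightarrow> (nat \<times> nat) \<Rightarrow> bool) \<Rightarrow> bool" where
  "is_section S R \<longleftrightarrow>
     (card S = 2 \<and> (\<forall>x\<in>S. \<forall>y\<in>S. \<not> R x y)) \<or>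
     (\<exists>n\<ge>1. S = {0..2} \<times> {0..n} \<and> strict_poset S R \<and>
        (\<forall>i\<le>2. \<forall>k l. k < l \<and> l \<le> n \<longrightarrow> R (i,k) (i,l)) \<and>
        (\<forall>k\<le>n. \<forall>i\<le>2. \<forall>j\<le>2. \<not> R (i,k) (j,k)) \<and>
        (\<forall>i\<le>2. \<forall>j\<le>2. \<forall>k\<le>n. \<forall>l\<le>n.
            R (i,k) (j,l) \<longrightarrow> R ((i+1) mod 3, k) ((j+1) mod 3, l)) \<and>
        (\<forall>k<n. \<exists>i\<le>2. \<exists>j\<le>2. \<not> R (i,k) (j,k+1)))"

definition osum_carrier :: "('b set \<times> ('b \<Rightarrow> 'b \<Rightarrow> bool)) list \<Rightarrow> (nat \<times> 'b) set" where
  "osum_carrier ss = {(m, s). m < length ss \<and> s \<in> fst (ss ! m)}"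

definition osum_lt :: "('b set \<times> ('b \<Rightarrow> 'b \<Rightarrow> bool)) list \<Rightarrow> (nat \<times> 'b) \<Rightarrow> (nat \<times> 'b) \<Rightarrow> bool" where
  "osum_lt ss x y \<longleftrightarrow> fst x < fst y \<or> (fst x = fst y \<and> snd (ss ! fst x) (snd x) (snd y))"

definition iso_to_tower_of_sections :: "'a set \<Rightarrow> ('a \<Rightarrow> 'a \<Rightarrow> bool) \<Rightarrow> bool" where
  "iso_to_tower_of_sections Q lt \<longleftrightarrow>
     (\<exists>ss. ss \<noteq> [] \<and> (\<forall>sec\<in>set ss. is_section (fst sec) (snd sec)) \<and>
        order_iso Q lt (osum_carrier ss) (osum_lt ss))"

end

theory Submission
  imports Defs
begin

(* Two consecutive levels of a 6-stack form a 6-crown, so every level has three elements, elements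
   whose ranks differ by at least two are comparable, and every 3-element antichain lies in a
   single level. Suppose level t lies in Q. Some element of level t + 1 lies in Q: otherwise let p
   be an element of Q of least rank m + 1 > t + 1; the retraction sends every element of level m
   below p to p, so p is the only element of Q of its rank, and an element of Q incomparable to p,
   which exists in a tower of sections, leads to a contradiction. An element y of Q in level t + 1
   is incomparable to some element of level t, a 3-element antichain of Q; in a tower of sections
   this puts y into a 3-element antichain of Q, which must be all of level t + 1. Induction upwards,
   and by duality downwards, gives Q = P. *)

section \<open>Ranks\<close>

definition chains_to :: "'a set \<Rightarrow> ('a \<Rightarrow> 'a \<Rightarrow> bool) \<Rightarrow> 'a \<Rightarrow> 'a list set" where
  "chains_to P lt p = {xs. xs \<noteq> [] \<and> set xs \<subseteq> P \<and> sorted_wrt lt xs \<and> last xs = p}"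

lemma rank_eq_Max_chains_to:
  "rank P lt p = Max ((\<lambda>xs. length xs - 1) ` chains_to P lt p)"
  unfolding rank_def chains_to_def by (simp add: image_Collect)

lemma fin_poset_trans:
  "fin_poset P lt \<Longrightarrow> x \<in> P \<Longrightarrow> y \<in> P \<Longrightarrow> z \<in> P \<Longrightarrow> lt x y \<Longrightarrow> lt y z \<Longrightarrow> lt x z"
  unfolding fin_poset_def strict_poset_def by metis

lemma sorted_wrt_lt_last:
  assumes "sorted_wrt lt xs" "a \<in> set (butlast xs)"
  shows "lt a (last xs)"
proof -
  have "xs = butlast xs @ [last xs]"
    using assms(2) by (cases xs rule: rev_cases) auto
  then show ?thesis
    using assms sorted_wrt_append[of lt "butlast xs" "[last xs]"] by simp
qed

lemma sorted_wrt_distinct: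
  assumes "strict_poset P lt" "set xs \<subseteq> P" "sorted_wrt lt xs"
  shows "distinct xs"
  using assms(2,3) by (induction xs) (use assms(1) in \<open>auto simp: strict_poset_def\<close>)

lemma chain_length_eq_card:
  "fin_poset P lt \<Longrightarrow> set xs \<subseteq> P \<Longrightarrow> sorted_wrt lt xs \<Longrightarrow> length xs = card (set xs)"
  using sorted_wrt_distinct distinct_card unfolding fin_poset_def by metis

lemma finite_chain_lengths:
  assumes "fin_poset P lt"
  shows "finite ((\<lambda>xs. length xs - 1) ` chains_to P lt p)"
proof (rule finite_subset)
  show "(\<lambda>xs. length xs - 1) ` chains_to P lt p \<subseteq> {..card P}"
  proof (rule image_subsetI)
    fix xs assume xs: "xs \<in> chains_to P lt p"
    then have "length xs = card (set xs)"
      using assms chain_length_eq_card[of P lt xs] by (simp add: chains_to_def)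
    also have "\<dots> \<le> card P"
      using xs assms card_mono by (auto simp: chains_to_def fin_poset_def)
    finally show "length xs - 1 \<in> {..card P}"
      by simp
  qed
qed simp

lemma rank_ge_chain:
  assumes "fin_poset P lt" "xs \<in> chains_to P lt p"
  shows "length xs - 1 \<le> rank P lt p"
  unfolding rank_eq_Max_chains_to using assms finite_chain_lengths by (intro Max_ge) auto

lemma rank_attained:
  assumes "fin_poset P lt" "p \<in> P"
  obtains xs where "xs \<in> chains_to P lt p" "length xs = Suc (rank P lt p)"
proof -
  have "[p] \<in> chains_to P lt p"
    using assms(2) by (simp add: chains_to_def)
  then have "rank P lt p \<in> (\<lambda>xs. length xs - 1) ` chains_to P lt p"
    unfolding rank_eq_Max_chains_to using assms(1) finite_chain_lengths by (intro Max_in) auto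
  then obtain xs where "xs \<in> chains_to P lt p" "rank P lt p = length xs - 1"
    by blast
  moreover from this(1) have "xs \<noteq> []"
    by (simp add: chains_to_def)
  ultimately show ?thesis
    using that by simp
qed

lemma rank_less:
  assumes "fin_poset P lt" "x \<in> P" "y \<in> P" "lt x y"
  shows "rank P lt x < rank P lt y"
proof -
  obtain xs where xs: "xs \<in> chains_to P lt x" "length xs = Suc (rank P lt x)"
    using rank_attained[OF assms(1,2)] by metis
  then have xs_chain: "xs \<noteq> []" "last xs = x" "set xs \<subseteq> P" "sorted_wrt lt xs"
    by (simp_all add: chains_to_def)
  then have xs_split: "xs = butlast xs @ [x]"
    by (metis append_butlast_last_id)
  have "lt a y" if "a \<in> set xs" for a
  proof -
    have "a \<in> set (butlast xs) \<or> a = x"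
      using that by (subst (asm) xs_split) auto
    then have "a = x \<or> lt a x"
      using xs_chain sorted_wrt_lt_last[of lt xs a] by auto
    then show "lt a y"
      using assms that xs_chain(3) fin_poset_trans[of P lt a x y] by blast
  qed
  then have "xs @ [y] \<in> chains_to P lt y"
    using xs(1) assms(3) by (simp add: chains_to_def sorted_wrt_append)
  from rank_ge_chain[OF assms(1) this] show ?thesis
    using xs(2) by simp
qed

lemma rank_Suc_below:
  assumes "fin_poset P lt" "y \<in> P" "rank P lt y = Suc k"
  obtains w where "w \<in> P" "lt w y" "rank P lt w = k"
proof -
  obtain xs where xs: "xs \<in> chains_to P lt y" "length xs = Suc (Suc k)"
    using rank_attained[OF assms(1,2)] assms(3) by metis
  then have xs_chain: "xs \<noteq> []" "last xs = y" "set xs \<subseteq> P" "sorted_wrt lt xs"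
    by (simp_all add: chains_to_def)
  define w where "w = last (butlast xs)"
  have ne: "butlast xs \<noteq> []"
    using xs(2) by (cases xs rule: rev_cases) auto
  then have w_in: "w \<in> set (butlast xs)"
    unfolding w_def by simp
  have "sorted_wrt lt (butlast xs)"
    using xs_chain(1,4) sorted_wrt_append[of lt "butlast xs" "[last xs]"] by simp
  then have "butlast xs \<in> chains_to P lt w"
    using ne xs_chain(3) by (auto simp: chains_to_def w_def dest: in_set_butlastD)
  then have "k \<le> rank P lt w"
    using rank_ge_chain[OF assms(1)] xs(2) by fastforce
  moreover have "w \<in> P" "lt w y"
    using w_in xs_chain sorted_wrt_lt_last[of lt xs w] by (auto dest: in_set_butlastD)
  moreover from this have "rank P lt w < Suc k"
    using rank_less[OF assms(1) _ assms(2)] assms(3) by metis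
  ultimately show ?thesis
    using that by simp
qed

lemma sorted_wrt_comparable:
  "sorted_wrt lt xs \<Longrightarrow> a \<in> set xs \<Longrightarrow> b \<in> set xs \<Longrightarrow> a = b \<or> lt a b \<or> lt b a"
  by (induction xs) auto

lemma chain_extends_to_maximal_chain:
  assumes "finite P" "is_chain P lt C"
  obtains D where "maximal_chain P lt D" "C \<subseteq> D"
proof -
  let ?chains = "{D. is_chain P lt D \<and> C \<subseteq> D}"
  have "?chains \<subseteq> Pow P"
    by (auto simp: is_chain_def)
  then have "finite ?chains"
    using assms(1) finite_subset by blast
  then obtain M where M: "M \<in> ?chains" "\<forall>D\<in>?chains. M \<subseteq> D \<longrightarrow> M = D"
    using finite_has_maximal2[of ?chains C] assms(2) by blast
  then have "maximal_chain P lt M"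
    unfolding maximal_chain_def by auto
  then show ?thesis
    using that M(1) by blast
qed

lemma rank_le_of_ranked:
  assumes "fin_poset P lt" "ranked_of_rank P lt n" "x \<in> P"
  shows "rank P lt x \<le> n"
proof -
  obtain xs where xs: "xs \<in> chains_to P lt x" "length xs = Suc (rank P lt x)"
    using rank_attained[OF assms(1,3)] by metis
  then have xs_chain: "set xs \<subseteq> P" "sorted_wrt lt xs"
    by (simp_all add: chains_to_def)
  then have "is_chain P lt (set xs)"
    using sorted_wrt_comparable unfolding is_chain_def by metis
  then obtain D where D: "maximal_chain P lt D" "set xs \<subseteq> D"
    using chain_extends_to_maximal_chain assms(1) unfolding fin_poset_def by metis
  have "length xs = card (set xs)"
    using chain_length_eq_card[OF assms(1) xs_chain] .
  also have "\<dots> \<le> card D"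
    using D assms(1) card_mono finite_subset
    unfolding maximal_chain_def is_chain_def fin_poset_def by metis
  also have "\<dots> = n + 1"
    using D(1) assms(2) unfolding ranked_of_rank_def by blast
  finally show ?thesis
    using xs(2) by simp
qed

lemma level_eq: "level P lt k = {x \<in> P. rank P lt x = k}"
  by (auto simp: levels_def)

section \<open>The 6-crown\<close>

lemma crown6_lt_iff:
  "j \<in> {0, 1, 2} \<Longrightarrow> c \<in> {3, 4, 5} \<Longrightarrow> crown6_lt j c \<longleftrightarrow> c \<noteq> 3 + (j + 1) mod 3"
  unfolding crown6_lt_def by (elim insertE emptyE) simp_all

lemma crown6_unique_not_above: "j \<in> {0, 1, 2} \<Longrightarrow> \<exists>!c. c \<in> {3, 4, 5} \<and> \<not> crown6_lt j c"
proof (rule ex1I[of _ "3 + (j + 1) mod 3"])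
  assume "j \<in> {0, 1, 2}"
  then show "3 + (j + 1) mod 3 \<in> {3, 4, 5} \<and> \<not> crown6_lt j (3 + (j + 1) mod 3)"
    by (elim insertE emptyE) (simp_all add: crown6_lt_def)
qed (metis crown6_lt_iff)

lemma crown6_unique_not_below: "c \<in> {3, 4, 5} \<Longrightarrow> \<exists>!j. j \<in> {0, 1, 2} \<and> \<not> crown6_lt j c"
proof (rule ex1I[of _ "(c - 1) mod 3"])
  assume "c \<in> {3, 4, 5}"
  then show "(c - 1) mod 3 \<in> {0, 1, 2} \<and> \<not> crown6_lt ((c - 1) mod 3) c"
    by (elim insertE emptyE) (simp_all add: crown6_lt_def)
next
  fix j assume "c \<in> {3, 4, 5}" "j \<in> {0, 1, 2} \<and> \<not> crown6_lt j c"
  then show "j = (c - 1) mod 3"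
    by (auto simp: crown6_lt_iff)
qed

lemma crown6_lt_between: "crown6_lt j c \<Longrightarrow> j \<in> {0, 1, 2} \<and> c \<in> {3, 4, 5}"
  unfolding crown6_lt_def by (elim insertE emptyE) simp_all

lemma crown6_top_has_lower: "c \<in> {3, 4, 5} \<Longrightarrow> \<exists>j. crown6_lt j c"
  unfolding crown6_lt_def by (elim insertE emptyE) auto

lemma bij_betw_Ex1_iff:
  assumes "bij_betw h A B" "\<And>x. x \<in> A \<Longrightarrow> \<Phi> x \<longleftrightarrow> \<Psi> (h x)"
  shows "(\<exists>!x. x \<in> A \<and> \<Phi> x) \<longleftrightarrow> (\<exists>!y. y \<in> B \<and> \<Psi> y)"
proof
  assume "\<exists>!x. x \<in> A \<and> \<Phi> x"
  then obtain x where x: "x \<in> A" "\<Phi> x" and uniq: "\<And>x'. x' \<in> A \<Longrightarrow> \<Phi> x' \<Longrightarrow> x' = x"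
    by blast
  show "\<exists>!y. y \<in> B \<and> \<Psi> y"
  proof (rule ex1I[of _ "h x"])
    show "h x \<in> B \<and> \<Psi> (h x)"
      using x assms bij_betwE by blast
    fix y assume "y \<in> B \<and> \<Psi> y"
    then obtain x' where "x' \<in> A" "h x' = y" "\<Psi> y"
      using assms(1) by (metis bij_betw_iff_bijections)
    then show "y = h x"
      using uniq assms(2) by blast
  qed
next
  assume "\<exists>!y. y \<in> B \<and> \<Psi> y"
  then show "\<exists>!x. x \<in> A \<and> \<Phi> x"
    using assms bij_betwE unfolding bij_betw_def inj_on_def by blast
qed

lemma bij_betw_Un_split:
  assumes "bij_betw h (A \<union> B) (X \<union> Y)" "X \<inter> Y = {}" "h ` A \<subseteq> X" "h ` B \<subseteq> Y"
  shows "bij_betw h A X" and "bij_betw h B Y"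
proof -
  have "h ` A \<union> h ` B = X \<union> Y"
    using assms(1) by (simp add: bij_betw_def image_Un)
  then have "h ` A = X" "h ` B = Y"
    using assms(2-4) by blast+
  then show "bij_betw h A X" "bij_betw h B Y"
    using assms(1) bij_betw_subset by blast+
qed

lemma crown_window_levels:
  assumes fp: "fin_poset P lt" and h: "bij_betw h (levels P lt k (Suc k)) crown6"
    and h_iff: "\<forall>x\<in>levels P lt k (Suc k). \<forall>y\<in>levels P lt k (Suc k).
      lt x y \<longleftrightarrow> crown6_lt (h x) (h y)"
  shows "x \<in> P \<Longrightarrow> rank P lt x = Suc k \<Longrightarrow> h x \<in> {3, 4, 5}"
    and "x \<in> P \<Longrightarrow> rank P lt x = k \<Longrightarrow> h x \<in> {0, 1, 2}"
proof -
  have window: "x \<in> levels P lt k (Suc k) \<longleftrightarrow> x \<in> P \<and> (rank P lt x = k \<or> rank P lt x = Suc k)" for x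
    by (auto simp: levels_def)
  show "h x \<in> {3, 4, 5}" if x: "x \<in> P" "rank P lt x = Suc k"
  proof -
    obtain w where "w \<in> P" "lt w x" "rank P lt w = k"
      using rank_Suc_below[OF fp x] by blast
    then show ?thesis
      using h_iff window x crown6_lt_between by blast
  qed
  show "h x \<in> {0, 1, 2}" if x: "x \<in> P" "rank P lt x = k"
  proof (rule ccontr)
    assume "h x \<notin> {0, 1, 2}"
    moreover have "h x \<in> crown6"
      using bij_betwE[OF h] x window by blast
    ultimately have "h x \<in> {3, 4, 5}"
      unfolding crown6_def by auto
    then obtain j where j: "crown6_lt j (h x)"
      using crown6_top_has_lower by blast
    then have "j \<in> h ` levels P lt k (Suc k)"
      using h crown6_lt_between[OF j] unfolding bij_betw_def crown6_def by auto
    then obtain w where w: "w \<in> levels P lt k (Suc k)" "h w = j"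
      by blast
    moreover have "x \<in> levels P lt k (Suc k)"
      using x window by blast
    ultimately have "lt w x"
      using h_iff j by blast
    then have "rank P lt w < k"
      using rank_less[OF fp] w(1) x window by blast
    then show False
      using w(1) window by auto
  qed
qed

lemma crown_window_bij:
  assumes fp: "fin_poset P lt" and iso: "order_iso (levels P lt k (Suc k)) lt crown6 crown6_lt"
  obtains h where "bij_betw h {x \<in> P. rank P lt x = k} {0, 1, 2}"
    and "bij_betw h {x \<in> P. rank P lt x = Suc k} {3, 4, 5}"
    and "\<And>a b. a \<in> {x \<in> P. rank P lt x = k} \<Longrightarrow> b \<in> {x \<in> P. rank P lt x = Suc k} \<Longrightarrow>
           lt a b \<longleftrightarrow> crown6_lt (h a) (h b)"
proof -
  let ?L0 = "{x \<in> P. rank P lt x = k}" and ?L1 = "{x \<in> P. rank P lt x = Suc k}"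
  obtain h where h: "bij_betw h (levels P lt k (Suc k)) crown6"
    and h_iff: "\<forall>x\<in>levels P lt k (Suc k). \<forall>y\<in>levels P lt k (Suc k).
      lt x y \<longleftrightarrow> crown6_lt (h x) (h y)"
    using iso unfolding order_iso_def by blast
  have window: "levels P lt k (Suc k) = ?L0 \<union> ?L1"
    by (auto simp: levels_def)
  have images: "h ` ?L0 \<subseteq> {0, 1, 2}" "h ` ?L1 \<subseteq> {3, 4, 5}"
    by (intro image_subsetI crown_window_levels[OF fp h h_iff]; simp)+
  have "crown6 = {0, 1, 2} \<union> {3, 4, 5}"
    by (auto simp: crown6_def)
  with h have h_split: "bij_betw h (?L0 \<union> ?L1) ({0, 1, 2} \<union> {3, 4, 5})"
    by (simp only: window)
  have "{0, 1, 2} \<inter> {3, 4, 5} = ({} :: nat set)"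
    by simp
  from bij_betw_Un_split[OF h_split this images] show ?thesis
    using that h_iff window by blast
qed

lemma crown_window:
  assumes "fin_poset P lt" "order_iso (levels P lt k (Suc k)) lt crown6 crown6_lt"
  shows "card {x \<in> P. rank P lt x = k} = 3"
    and "card {x \<in> P. rank P lt x = Suc k} = 3"
    and "a \<in> P \<Longrightarrow> rank P lt a = k \<Longrightarrow> \<exists>!b. b \<in> P \<and> rank P lt b = Suc k \<and> \<not> lt a b"
    and "b \<in> P \<Longrightarrow> rank P lt b = Suc k \<Longrightarrow> \<exists>!a. a \<in> P \<and> rank P lt a = k \<and> \<not> lt a b"
proof -
  let ?L0 = "{x \<in> P. rank P lt x = k}" and ?L1 = "{x \<in> P. rank P lt x = Suc k}"
  obtain h where h0: "bij_betw h ?L0 {0, 1, 2}" and h1: "bij_betw h ?L1 {3, 4, 5}"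
    and h_iff: "\<And>a b. a \<in> ?L0 \<Longrightarrow> b \<in> ?L1 \<Longrightarrow> lt a b \<longleftrightarrow> crown6_lt (h a) (h b)"
    using crown_window_bij[OF assms] by blast
  show "card ?L0 = 3" "card ?L1 = 3"
    using bij_betw_same_card[OF h0] bij_betw_same_card[OF h1] by simp_all
  show "\<exists>!b. b \<in> P \<and> rank P lt b = Suc k \<and> \<not> lt a b" if a: "a \<in> P" "rank P lt a = k"
  proof -
    have "\<exists>!c. c \<in> {3, 4, 5} \<and> \<not> crown6_lt (h a) c"
      using crown6_unique_not_above bij_betwE[OF h0] a by simp
    then have "\<exists>!b. b \<in> ?L1 \<and> \<not> lt a b"
      using bij_betw_Ex1_iff[OF h1, of "\<lambda>b. \<not> lt a b"] h_iff a by simp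
    then show ?thesis
      by simp
  qed
  show "\<exists>!a. a \<in> P \<and> rank P lt a = k \<and> \<not> lt a b" if b: "b \<in> P" "rank P lt b = Suc k"
  proof -
    have "\<exists>!j. j \<in> {0, 1, 2} \<and> \<not> crown6_lt j (h b)"
      using crown6_unique_not_below bij_betwE[OF h1] b by simp
    then have "\<exists>!a. a \<in> ?L0 \<and> \<not> lt a b"
      using bij_betw_Ex1_iff[OF h0, of "\<lambda>a. \<not> lt a b"] h_iff b by simp
    then show ?thesis
      by simp
  qed
qed

section \<open>Crown stacks\<close>

definition antichain :: "('a \<Rightarrow> 'a \<Rightarrow> bool) \<Rightarrow> 'a set \<Rightarrow> bool" where
  "antichain lt A \<longleftrightarrow> (\<forall>x\<in>A. \<forall>y\<in>A. x \<noteq> y \<longrightarrow> \<not> lt x y)"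

lemma antichain_converse: "antichain (\<lambda>x y. lt y x) = antichain lt"
  unfolding antichain_def by (intro ext) metis

lemma antichain_pair: "antichain lt {x, y} \<longleftrightarrow> x = y \<or> \<not> lt x y \<and> \<not> lt y x"
  unfolding antichain_def by auto

lemma antichain_subset: "antichain lt B \<Longrightarrow> A \<subseteq> B \<Longrightarrow> antichain lt A"
  unfolding antichain_def by blast

lemma card3_avoid2:
  assumes "card A = 3"
  obtains c where "c \<in> A" "c \<noteq> a" "c \<noteq> a'"
proof -
  obtain x y z where "A = {x, y, z}" "x \<noteq> y" "y \<noteq> z" "x \<noteq> z"
    using assms card_3_iff by metis
  then show ?thesis
    using that by blast
qed

(* Consecutive levels form a 6-crown, i.e. K(3,3) minus a perfect matching: each element is
   incomparable to exactly one element of each neighbouring level. *)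
locale crown_stack =
  fixes P :: "'a set" and lt :: "'a \<Rightarrow> 'a \<Rightarrow> bool" and r :: "'a \<Rightarrow> nat" and n :: nat
  assumes trans: "x \<in> P \<Longrightarrow> y \<in> P \<Longrightarrow> z \<in> P \<Longrightarrow> lt x y \<Longrightarrow> lt y z \<Longrightarrow> lt x z"
    and rank_strict_mono: "x \<in> P \<Longrightarrow> y \<in> P \<Longrightarrow> lt x y \<Longrightarrow> r x < r y"
    and rank_bounded: "x \<in> P \<Longrightarrow> r x \<le> n"
    and card_level: "k \<le> n \<Longrightarrow> card {x \<in> P. r x = k} = 3"
    and unique_not_above: "a \<in> P \<Longrightarrow> r a = k \<Longrightarrow> k < n \<Longrightarrow> \<exists>!b. b \<in> P \<and> r b = Suc k \<and> \<not> lt a b"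
    and unique_not_below: "b \<in> P \<Longrightarrow> r b = Suc k \<Longrightarrow> \<exists>!a. a \<in> P \<and> r a = k \<and> \<not> lt a b"

lemma six_stack_crown_stack:
  assumes "six_stack P lt"
  obtains n where "crown_stack P lt (rank P lt) n"
proof -
  obtain n where fp: "fin_poset P lt" and n: "1 \<le> n" and ranked: "ranked_of_rank P lt n"
    and windows: "\<And>k. k < n \<Longrightarrow> order_iso (levels P lt k (Suc k)) lt crown6 crown6_lt"
    using assms unfolding six_stack_def by auto
  have "crown_stack P lt (rank P lt) n"
  proof
    show "lt x z" if "x \<in> P" "y \<in> P" "z \<in> P" "lt x y" "lt y z" for x y z
      using fin_poset_trans[OF fp] that by blast
    show "rank P lt x < rank P lt y" if "x \<in> P" "y \<in> P" "lt x y" for x y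
      using rank_less[OF fp] that by blast
    show "rank P lt x \<le> n" if "x \<in> P" for x
      using rank_le_of_ranked[OF fp ranked] that .
    show "card {x \<in> P. rank P lt x = k} = 3" if "k \<le> n" for k
    proof (cases "k < n")
      case True
      then show ?thesis
        using crown_window(1)[OF fp windows] by blast
    next
      case False
      then have "k = Suc (n - 1)" "n - 1 < n"
        using that n by auto
      then show ?thesis
        using crown_window(2)[OF fp windows] by metis
    qed
    show "\<exists>!b. b \<in> P \<and> rank P lt b = Suc k \<and> \<not> lt a b"
      if "a \<in> P" "rank P lt a = k" "k < n" for a k
      using crown_window(3)[OF fp windows] that by blast
    show "\<exists>!a. a \<in> P \<and> rank P lt a = k \<and> \<not> lt a b"
      if "b \<in> P" "rank P lt b = Suc k" for b k
    proof -
      have "k < n"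
        using rank_le_of_ranked[OF fp ranked] that by fastforce
      then show ?thesis
        using crown_window(4)[OF fp windows] that by blast
    qed
  qed
  then show ?thesis
    using that by blast
qed

context crown_stack
begin

abbreviation lev :: "nat \<Rightarrow> 'a set" where
  "lev k \<equiv> {x \<in> P. r x = k}"

lemma level_nonempty: "k \<le> n \<Longrightarrow> lev k \<noteq> {}"
  using card_level[of k] by (metis card.empty zero_neq_numeral)

lemma not_lt_same_rank: "x \<in> P \<Longrightarrow> y \<in> P \<Longrightarrow> r x = r y \<Longrightarrow> \<not> lt x y"
  using rank_strict_mono by fastforce

lemma antichain_level: "antichain lt (lev k)"
  unfolding antichain_def using not_lt_same_rank by simp

lemma lt_of_ne_not_below:
  assumes "b \<in> P" "r b = Suc k" "a \<in> lev k" "a' \<in> lev k" "a \<noteq> a'" "\<not> lt a b"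
  shows "lt a' b"
  using unique_not_below[OF assms(1,2)] assms(3-6) by blast

lemma lt_of_ne_not_above:
  assumes "a \<in> P" "r a < n" "b \<in> lev (Suc (r a))" "b' \<in> lev (Suc (r a))" "b \<noteq> b'" "\<not> lt a b"
  shows "lt a b'"
  using unique_not_above[OF assms(1) refl assms(2)] assms(3-6) by blast

lemma two_below:
  assumes "b \<in> P" "r b = Suc k"
  obtains a a' where "a \<in> lev k" "a' \<in> lev k" "a \<noteq> a'" "lt a b" "lt a' b"
proof -
  obtain a0 where a0: "a0 \<in> lev k" "\<not> lt a0 b"
    using unique_not_below[OF assms] by blast
  have card: "card (lev k) = 3"
    using card_level rank_bounded[OF assms(1)] assms(2) by simp
  obtain a where a: "a \<in> lev k" "a \<noteq> a0"
    using card3_avoid2[OF card, of a0 a0] by blast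
  obtain a' where a': "a' \<in> lev k" "a' \<noteq> a0" "a' \<noteq> a"
    using card3_avoid2[OF card, of a0 a] by blast
  show ?thesis
    using that[OF a(1) a'(1) a'(3)[symmetric]] lt_of_ne_not_below[OF assms a0(1)] a0(2) a a' by blast
qed

lemma two_above:
  assumes "a \<in> P" "r a < n"
  obtains b b' where "b \<in> lev (Suc (r a))" "b' \<in> lev (Suc (r a))" "b \<noteq> b'" "lt a b" "lt a b'"
proof -
  obtain b0 where b0: "b0 \<in> lev (Suc (r a))" "\<not> lt a b0"
    using unique_not_above[OF assms(1) refl assms(2)] by blast
  have card: "card (lev (Suc (r a))) = 3"
    using card_level assms(2) by simp
  obtain b where b: "b \<in> lev (Suc (r a))" "b \<noteq> b0"
    using card3_avoid2[OF card, of b0 b0] by blast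
  obtain b' where b': "b' \<in> lev (Suc (r a))" "b' \<noteq> b0" "b' \<noteq> b"
    using card3_avoid2[OF card, of b0 b] by blast
  show ?thesis
    using that[OF b(1) b'(1) b'(3)[symmetric]] lt_of_ne_not_above[OF assms b0(1)] b0(2) b b' by blast
qed

lemma common_lower_cover:
  assumes "b \<in> lev (Suc k)" "b' \<in> lev (Suc k)"
  obtains a where "a \<in> lev k" "lt a b" "lt a b'"
proof -
  obtain a0 where a0: "a0 \<in> lev k" "\<not> lt a0 b"
    using unique_not_below assms(1) by blast
  obtain a0' where a0': "a0' \<in> lev k" "\<not> lt a0' b'"
    using unique_not_below assms(2) by blast
  have "card (lev k) = 3"
    using card_level rank_bounded assms(1) by fastforce
  then obtain a where a: "a \<in> lev k" "a \<noteq> a0" "a \<noteq> a0'"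
    using card3_avoid2[of "lev k" a0 a0'] by blast
  have "lt a b" "lt a b'"
    using lt_of_ne_not_below[of b k a0 a] lt_of_ne_not_below[of b' k a0' a] a a0 a0' assms
    by auto
  then show ?thesis
    using that a(1) by blast
qed

lemma lt_of_rank_gap:
  assumes "x \<in> P" "y \<in> P" "r x + 2 \<le> r y"
  shows "lt x y"
proof -
  obtain d where "r y = r x + 2 + d"
    using assms(3) le_Suc_ex by blast
  with assms(2) show ?thesis
  proof (induction d arbitrary: y)
    case 0
    have "r x < n"
      using rank_bounded[OF 0(1)] 0(2) by simp
    then obtain b b' where b: "b \<in> lev (Suc (r x))" "b' \<in> lev (Suc (r x))" "b \<noteq> b'"
      and x_below: "lt x b" "lt x b'"
      using two_above[OF assms(1)] by blast
    have "lt b y \<or> lt b' y"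
      using lt_of_ne_not_below[of y "Suc (r x)" b b'] b 0 by auto
    then show ?case
      using trans[OF assms(1) _ 0(1)] b x_below by blast
  next
    case (Suc d)
    obtain a where "a \<in> lev (r x + 2 + d)" "lt a y"
      using two_below[of y "r x + 2 + d"] Suc.prems by auto
    then show ?case
      using Suc.IH[of a] trans[OF assms(1) _ Suc.prems(1)] by blast
  qed
qed

lemma rank_le_Suc_of_not_lt: "x \<in> P \<Longrightarrow> y \<in> P \<Longrightarrow> \<not> lt y x \<Longrightarrow> r x \<le> Suc (r y)"
  using lt_of_rank_gap[of y x] by linarith

lemma antichain_rank_not_Suc:
  assumes "A \<subseteq> P" "antichain lt A" "u \<in> A" "v \<in> A" "w \<in> A" "distinct [u, v, w]"
  shows "r v \<noteq> Suc (r u)"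
proof
  assume v: "r v = Suc (r u)"
  have in_P: "u \<in> P" "v \<in> P" "w \<in> P"
    using assms(1,3-5) by auto
  have incomparable: "\<not> lt u v" "\<not> lt u w" "\<not> lt w v" "\<not> lt w u"
    using assms(2-6) unfolding antichain_def by auto
  have "r w \<le> Suc (r u)" "r v \<le> Suc (r w)"
    using rank_le_Suc_of_not_lt in_P incomparable by blast+
  then consider "r w = r u" | "r w = Suc (r u)"
    using v by linarith
  then show False
  proof cases
    case 1
    then show False
      using lt_of_ne_not_below[of v "r u" u w] in_P incomparable assms(6) v by auto
  next
    case 2
    have "r u < n"
      using rank_bounded[OF in_P(2)] v by simp
    then show False
      using lt_of_ne_not_above[of u v w] in_P incomparable assms(6) v 2 by auto
  qed
qed

lemma antichain3_same_rank:
  assumes "A \<subseteq> P" "antichain lt A" "card A = 3" "x \<in> A" "y \<in> A"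
  shows "r x = r y"
proof -
  obtain u v w where A: "A = {u, v, w}" and uvw: "distinct [u, v, w]"
    using assms(3) card_3_iff[of A] by auto
  have "r v \<noteq> Suc (r u)" "r u \<noteq> Suc (r v)" "r w \<noteq> Suc (r u)" "r u \<noteq> Suc (r w)"
    using antichain_rank_not_Suc[OF assms(1,2), of u v w] antichain_rank_not_Suc[OF assms(1,2), of v u w]
      antichain_rank_not_Suc[OF assms(1,2), of u w v] antichain_rank_not_Suc[OF assms(1,2), of w u v]
      uvw A by auto
  moreover have "\<not> lt u v" "\<not> lt v u" "\<not> lt u w" "\<not> lt w u"
    using assms(2) uvw A unfolding antichain_def by auto
  then have "r v \<le> Suc (r u)" "r u \<le> Suc (r v)" "r w \<le> Suc (r u)" "r u \<le> Suc (r w)"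
    using rank_le_Suc_of_not_lt assms(1) A by auto
  ultimately have "r v = r u" "r w = r u"
    by linarith+
  then show ?thesis
    using assms(4,5) A by auto
qed

lemma crown_stack_dual: "crown_stack P (\<lambda>x y. lt y x) (\<lambda>x. n - r x) n"
proof
  show "lt z x" if "x \<in> P" "y \<in> P" "z \<in> P" "lt y x" "lt z y" for x y z
    using trans that by blast
  show "n - r x < n - r y" if "x \<in> P" "y \<in> P" "lt y x" for x y
    using rank_strict_mono[OF that(2,1,3)] rank_bounded[OF that(1)] by simp
  show "n - r x \<le> n" for x
    by simp
  show "card {x \<in> P. n - r x = k} = 3" if "k \<le> n" for k
  proof -
    have "{x \<in> P. n - r x = k} = lev (n - k)"
      using rank_bounded that by fastforce
    then show ?thesis
      using card_level by simp
  qed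
  show "\<exists>!b. b \<in> P \<and> n - r b = Suc k \<and> \<not> lt b a"
    if a: "a \<in> P" "n - r a = k" "k < n" for a k
  proof -
    have "r a = Suc (n - Suc k)"
      using a rank_bounded[OF a(1)] by simp
    moreover have "n - r b = Suc k \<longleftrightarrow> r b = n - Suc k" if "b \<in> P" for b
      using rank_bounded[OF that] a(3) by auto
    ultimately show ?thesis
      using unique_not_below[OF a(1)] by (simp cong: conj_cong)
  qed
  show "\<exists>!a. a \<in> P \<and> n - r a = k \<and> \<not> lt b a"
    if b: "b \<in> P" "n - r b = Suc k" for b k
  proof -
    have rb: "r b = n - Suc k" "n - Suc k < n"
      using b rank_bounded[OF b(1)] by auto
    have "n - r a = k \<longleftrightarrow> r a = Suc (n - Suc k)" if "a \<in> P" for a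
      using rank_bounded[OF that] rank_bounded[OF b(1)] b(2) by auto
    then show ?thesis
      using unique_not_above[OF b(1) rb] by (simp cong: conj_cong)
  qed
qed

end

section \<open>Towers of sections\<close>

(* In a tower of sections incomparable elements lie in the same section, which is either a
   2-element antichain or a union of 3-element antichains; the proof uses nothing else about Q. *)
definition has_incomparable_partners :: "'a set \<Rightarrow> ('a \<Rightarrow> 'a \<Rightarrow> bool) \<Rightarrow> bool" where
  "has_incomparable_partners Q lt \<longleftrightarrow> (\<forall>x\<in>Q. \<exists>y\<in>Q. y \<noteq> x \<and> antichain lt {x, y})"

definition antichain3_propagates :: "'a set \<Rightarrow> ('a \<Rightarrow> 'a \<Rightarrow> bool) \<Rightarrow> bool" where
  "antichain3_propagates Q lt \<longleftrightarrow>
     (\<forall>A x w. A \<subseteq> Q \<and> card A = 3 \<and> antichain lt A \<and> x \<in> A \<and> w \<in> Q \<and> antichain lt {x, w} \<longrightarrow>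
        (\<exists>B\<subseteq>Q. w \<in> B \<and> card B = 3 \<and> antichain lt B))"

lemma antichain3_propagatesD:
  assumes "antichain3_propagates Q lt" "A \<subseteq> Q" "card A = 3" "antichain lt A" "x \<in> A" "w \<in> Q"
    "antichain lt {x, w}"
  obtains B where "B \<subseteq> Q" "w \<in> B" "card B = 3" "antichain lt B"
proof -
  have "\<exists>B\<subseteq>Q. w \<in> B \<and> card B = 3 \<and> antichain lt B"
    using assms unfolding antichain3_propagates_def by (elim allE impE) (intro conjI)
  then show ?thesis
    using that by blast
qed

lemma has_incomparable_partners_converse:
  "has_incomparable_partners Q (\<lambda>x y. lt y x) \<longleftrightarrow> has_incomparable_partners Q lt"
  by (simp only: has_incomparable_partners_def antichain_converse[of lt])

lemma antichain3_propagates_converse: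
  "antichain3_propagates Q (\<lambda>x y. lt y x) \<longleftrightarrow> antichain3_propagates Q lt"
  by (simp only: antichain3_propagates_def antichain_converse[of lt])

lemma section_rows:
  assumes "is_section S R"
  shows "card S = 2 \<and> antichain R S \<or> (\<forall>w\<in>S. \<exists>B\<subseteq>S. w \<in> B \<and> card B = 3 \<and> antichain R B)"
  using assms unfolding is_section_def
proof (elim disjE conjE exE)
  assume "card S = 2" "\<forall>x\<in>S. \<forall>y\<in>S. \<not> R x y"
  then show ?thesis
    unfolding antichain_def by blast
next
  fix N assume S: "S = {0..2} \<times> {0..N}" and row: "\<forall>k\<le>N. \<forall>i\<le>2. \<forall>j\<le>2. \<not> R (i, k) (j, k)"
  have "\<exists>B\<subseteq>S. w \<in> B \<and> card B = 3 \<and> antichain R B" if "w \<in> S" for w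
  proof -
    obtain i k where w: "w = (i, k)" "i \<le> 2" "k \<le> N"
      using \<open>w \<in> S\<close> S by auto
    let ?B = "{(0, k), (1, k), (2 :: nat, k)}"
    have "?B \<subseteq> S" "w \<in> ?B"
      using S w by auto
    moreover have "card ?B = 3"
      by simp
    moreover have "antichain R ?B"
      using row w(3) unfolding antichain_def by auto
    ultimately show ?thesis
      by blast
  qed
  then show ?thesis
    by blast
qed

lemma section_has_incomparable_partners:
  assumes "is_section S R"
  shows "has_incomparable_partners S R"
  unfolding has_incomparable_partners_def
proof
  fix s assume s: "s \<in> S"
  from section_rows[OF assms] show "\<exists>s'\<in>S. s' \<noteq> s \<and> antichain R {s, s'}"
  proof
    assume S: "card S = 2 \<and> antichain R S"
    then obtain x y where "x \<in> S" "y \<in> S" "x \<noteq> y"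
      using card_2_iff' by metis
    then obtain s' where "s' \<in> S" "s' \<noteq> s"
      by metis
    then show ?thesis
      using S s antichain_subset[of R S "{s, s'}"] by blast
  next
    assume "\<forall>w\<in>S. \<exists>B\<subseteq>S. w \<in> B \<and> card B = 3 \<and> antichain R B"
    then obtain B where B: "B \<subseteq> S" "s \<in> B" "card B = 3" "antichain R B"
      using s by blast
    then obtain s' where "s' \<in> B" "s' \<noteq> s"
      using card3_avoid2[of B s s] by blast
    then show ?thesis
      using B antichain_subset[of R B "{s, s'}"] by blast
  qed
qed

lemma section_antichain3_propagates:
  assumes "is_section S R"
  shows "antichain3_propagates S R"
  unfolding antichain3_propagates_def
proof (intro allI impI, elim conjE)
  fix A x w assume A: "A \<subseteq> S" "card A = 3" and w: "w \<in> S"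
  from section_rows[OF assms] show "\<exists>B\<subseteq>S. w \<in> B \<and> card B = 3 \<and> antichain R B"
  proof
    assume "card S = 2 \<and> antichain R S"
    then have "card A \<le> 2"
      using A(1) card_mono[of S A] by (metis card.infinite zero_neq_numeral)
    then show ?thesis
      using A(2) by simp
  next
    assume "\<forall>w\<in>S. \<exists>B\<subseteq>S. w \<in> B \<and> card B = 3 \<and> antichain R B"
    then show ?thesis
      using w by blast
  qed
qed

lemma osum_incomparable_same_summand:
  "\<not> osum_lt ss x y \<Longrightarrow> \<not> osum_lt ss y x \<Longrightarrow> fst x = fst y"
  unfolding osum_lt_def by linarith

lemma antichain_osum_summand:
  "antichain (osum_lt ss) (Pair m ` A) \<longleftrightarrow> antichain (snd (ss ! m)) A"
  unfolding antichain_def osum_lt_def by auto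

lemma osum_has_incomparable_partners:
  assumes "\<forall>sec\<in>set ss. is_section (fst sec) (snd sec)"
  shows "has_incomparable_partners (osum_carrier ss) (osum_lt ss)"
  unfolding has_incomparable_partners_def
proof
  fix x assume "x \<in> osum_carrier ss"
  then obtain m s where x: "x = (m, s)" "m < length ss" "s \<in> fst (ss ! m)"
    unfolding osum_carrier_def by auto
  then have "is_section (fst (ss ! m)) (snd (ss ! m))"
    using assms by simp
  then obtain s' where s': "s' \<in> fst (ss ! m)" "s' \<noteq> s" "antichain (snd (ss ! m)) {s, s'}"
    using section_has_incomparable_partners x(3) unfolding has_incomparable_partners_def by blast
  then have "antichain (osum_lt ss) {x, (m, s')}"
    using antichain_osum_summand[of ss m "{s, s'}"] x(1) by simp
  moreover have "(m, s') \<in> osum_carrier ss" "(m, s') \<noteq> x"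
    using x s' unfolding osum_carrier_def by auto
  ultimately show "\<exists>y\<in>osum_carrier ss. y \<noteq> x \<and> antichain (osum_lt ss) {x, y}"
    by blast
qed

lemma osum_antichain_same_summand:
  "antichain (osum_lt ss) A \<Longrightarrow> x \<in> A \<Longrightarrow> a \<in> A \<Longrightarrow> fst a = fst x"
  using osum_incomparable_same_summand[of ss x a] unfolding antichain_def by (cases "a = x") auto

lemma osum_antichain_in_summand:
  assumes "A \<subseteq> osum_carrier ss" "antichain (osum_lt ss) A" "(m, s) \<in> A"
  shows "A = Pair m ` snd ` A" and "m < length ss" and "snd ` A \<subseteq> fst (ss ! m)"
proof -
  have "fst a = m" if "a \<in> A" for a
    using osum_antichain_same_summand[OF assms(2,3) that] by simp
  then show A_eq: "A = Pair m ` snd ` A"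
    by (force simp: image_image)
  have carrier_iff: "(m, t) \<in> osum_carrier ss \<longleftrightarrow> m < length ss \<and> t \<in> fst (ss ! m)" for t
    unfolding osum_carrier_def by simp
  show "m < length ss"
    using assms(1,3) carrier_iff by blast
  show "snd ` A \<subseteq> fst (ss ! m)"
  proof
    fix t assume "t \<in> snd ` A"
    then have "(m, t) \<in> A"
      using A_eq by blast
    then show "t \<in> fst (ss ! m)"
      using assms(1) carrier_iff by blast
  qed
qed

lemma osum_antichain3_propagates:
  assumes "\<forall>sec\<in>set ss. is_section (fst sec) (snd sec)"
  shows "antichain3_propagates (osum_carrier ss) (osum_lt ss)"
  unfolding antichain3_propagates_def
proof (intro allI impI, elim conjE)
  fix A x w
  assume A: "A \<subseteq> osum_carrier ss" "card A = 3" "antichain (osum_lt ss) A" "x \<in> A"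
    and w: "w \<in> osum_carrier ss" "antichain (osum_lt ss) {x, w}"
  obtain m s where x: "x = (m, s)"
    by (cases x)
  let ?S = "fst (ss ! m)" and ?R = "snd (ss ! m)"
  have A_eq: "A = Pair m ` snd ` A" and m: "m < length ss" and A_S: "snd ` A \<subseteq> ?S"
    using osum_antichain_in_summand[OF A(1,3), of m s] A(4) x by simp_all
  have w_m: "fst w = m"
    using osum_antichain_same_summand[of ss "{x, w}" x w] w(2) x by simp
  then have w_S: "snd w \<in> ?S"
    using w(1) unfolding osum_carrier_def by auto
  have sec: "antichain3_propagates ?S ?R"
    using section_antichain3_propagates assms m nth_mem by blast
  have "card (snd ` A) = 3"
    using A(2) A_eq card_image[of "Pair m" "snd ` A"] by (simp add: inj_on_def)
  moreover have "antichain ?R (snd ` A)"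
    using A(3) A_eq antichain_osum_summand[of ss m] by metis
  moreover have "antichain ?R {s, snd w}"
    using w(2) x w_m antichain_osum_summand[of ss m "{s, snd w}"]
    by (metis image_empty image_insert prod.collapse)
  moreover have "s \<in> snd ` A"
    using A(4) x by force
  ultimately obtain B where B: "B \<subseteq> ?S" "snd w \<in> B" "card B = 3" "antichain ?R B"
    using antichain3_propagatesD[OF sec A_S] w_S by metis
  have "w \<in> Pair m ` B"
    using B(2) w_m by (metis image_eqI prod.collapse)
  moreover have "Pair m ` B \<subseteq> osum_carrier ss"
    using B(1) m unfolding osum_carrier_def by auto
  moreover have "card (Pair m ` B) = 3" "antichain (osum_lt ss) (Pair m ` B)"
    using B(3,4) card_image[of "Pair m" B] antichain_osum_summand[of ss m B] by (simp_all add: inj_on_def)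
  ultimately show "\<exists>B\<subseteq>osum_carrier ss. w \<in> B \<and> card B = 3 \<and> antichain (osum_lt ss) B"
    by blast
qed

lemma antichain_image_iff:
  assumes "inj_on g Q" "\<forall>x\<in>Q. \<forall>y\<in>Q. lt x y \<longleftrightarrow> L (g x) (g y)" "A \<subseteq> Q"
  shows "antichain L (g ` A) \<longleftrightarrow> antichain lt A"
proof -
  have "x \<noteq> y \<longleftrightarrow> g x \<noteq> g y" if "x \<in> A" "y \<in> A" for x y
    using assms(1,3) that unfolding inj_on_def by blast
  then show ?thesis
    using assms(2,3) unfolding antichain_def by (simp add: subset_iff)
qed

lemma order_iso_has_incomparable_partners:
  assumes "order_iso Q lt C L" "has_incomparable_partners C L"
  shows "has_incomparable_partners Q lt"
  unfolding has_incomparable_partners_def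
proof
  obtain g where g: "bij_betw g Q C" "\<forall>x\<in>Q. \<forall>y\<in>Q. lt x y \<longleftrightarrow> L (g x) (g y)"
    using assms(1) unfolding order_iso_def by blast
  fix x assume x: "x \<in> Q"
  then obtain c where c: "c \<in> C" "c \<noteq> g x" "antichain L {g x, c}"
    using assms(2) bij_betwE[OF g(1)] unfolding has_incomparable_partners_def by blast
  then obtain y where y: "y \<in> Q" "g y = c"
    using g(1) by (metis bij_betw_iff_bijections)
  then have "antichain lt {x, y}"
    using antichain_image_iff[OF bij_betw_imp_inj_on[OF g(1)] g(2), of "{x, y}"] c(3) x by auto
  moreover have "y \<noteq> x"
    using y c(2) by blast
  ultimately show "\<exists>y\<in>Q. y \<noteq> x \<and> antichain lt {x, y}"
    using y(1) by blast
qed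

lemma order_iso_antichain3_propagates:
  assumes "order_iso Q lt C L" "antichain3_propagates C L"
  shows "antichain3_propagates Q lt"
  unfolding antichain3_propagates_def
proof (intro allI impI, elim conjE)
  obtain g where g: "bij_betw g Q C" "\<forall>x\<in>Q. \<forall>y\<in>Q. lt x y \<longleftrightarrow> L (g x) (g y)"
    using assms(1) unfolding order_iso_def by blast
  have inj: "inj_on g Q"
    using g(1) bij_betw_imp_inj_on by blast
  fix A x w
  assume A: "A \<subseteq> Q" "card A = 3" "antichain lt A" "x \<in> A" and w: "w \<in> Q" "antichain lt {x, w}"
  have "g ` A \<subseteq> C" "card (g ` A) = 3" "antichain L (g ` A)" "g x \<in> g ` A"
    using A bij_betwE[OF g(1)] card_image[OF inj_on_subset[OF inj A(1)]] antichain_image_iff[OF inj g(2)]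
    by auto
  moreover have "g w \<in> C" "antichain L {g x, g w}"
    using w A(1,4) bij_betwE[OF g(1)] antichain_image_iff[OF inj g(2), of "{x, w}"] by auto
  ultimately obtain B' where B': "B' \<subseteq> C" "g w \<in> B'" "card B' = 3" "antichain L B'"
    using antichain3_propagatesD[OF assms(2)] by metis
  define B where "B = {y \<in> Q. g y \<in> B'}"
  have "g ` B = B'"
    using B'(1) g(1) unfolding B_def bij_betw_def by blast
  moreover have "B \<subseteq> Q" "w \<in> B"
    using w(1) B'(2) unfolding B_def by auto
  ultimately have "card B = 3" "antichain lt B"
    using B'(3,4) card_image[OF inj_on_subset[OF inj]] antichain_image_iff[OF inj g(2)] by metis+
  then show "\<exists>B\<subseteq>Q. w \<in> B \<and> card B = 3 \<and> antichain lt B"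
    using \<open>B \<subseteq> Q\<close> \<open>w \<in> B\<close> by blast
qed

lemma tower_has_incomparable_partners:
  "iso_to_tower_of_sections Q lt \<Longrightarrow> has_incomparable_partners Q lt"
  unfolding iso_to_tower_of_sections_def
  using order_iso_has_incomparable_partners osum_has_incomparable_partners by blast

lemma tower_antichain3_propagates:
  "iso_to_tower_of_sections Q lt \<Longrightarrow> antichain3_propagates Q lt"
  unfolding iso_to_tower_of_sections_def
  using order_iso_antichain3_propagates osum_antichain3_propagates by blast

section \<open>Retractions of crown stacks\<close>

locale crown_stack_retraction = crown_stack +
  fixes Q :: "'a set" and f :: "'a \<Rightarrow> 'a"
  assumes Q_subset: "Q \<subseteq> P"
    and f_into: "x \<in> P \<Longrightarrow> f x \<in> Q"
    and f_mono: "x \<in> P \<Longrightarrow> y \<in> P \<Longrightarrow> lt x y \<Longrightarrow> f x = f y \<or> lt (f x) (f y)"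
    and f_id: "q \<in> Q \<Longrightarrow> f q = q"
    and partners: "has_incomparable_partners Q lt"
    and propagates: "antichain3_propagates Q lt"
begin

lemma crown_stack_retraction_dual: "crown_stack_retraction P (\<lambda>x y. lt y x) (\<lambda>x. n - r x) n Q f"
proof (rule crown_stack_retraction.intro[OF crown_stack_dual], unfold_locales)
  show "f x = f y \<or> lt (f y) (f x)" if "x \<in> P" "y \<in> P" "lt y x" for x y
    using f_mono[OF that(2,1,3)] by auto
qed (use Q_subset f_into f_id partners propagates has_incomparable_partners_converse[of Q lt]
    antichain3_propagates_converse[of Q lt] in auto)

lemma f_rank_gt:
  assumes "lev t \<subseteq> Q" "x \<in> P" "t < r x"
  shows "t < r (f x)"
proof -
  obtain b b' where b: "b \<in> lev t" "b' \<in> lev t" "b \<noteq> b'" "lt b x" "lt b' x"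
  proof (cases "r x = Suc t")
    case True
    then show ?thesis
      using two_below[OF assms(2) True] that by blast
  next
    case False
    have card: "card (lev t) = 3"
      using card_level rank_bounded[OF assms(2)] assms(3) by simp
    obtain b where b: "b \<in> lev t"
      using level_nonempty[of t] rank_bounded[OF assms(2)] assms(3) by auto
    obtain b' where b': "b' \<in> lev t" "b' \<noteq> b"
      using card3_avoid2[OF card, of b b] by blast
    have "lt b x" "lt b' x"
      using lt_of_rank_gap[of b x] lt_of_rank_gap[of b' x] b b' assms(2,3) False by auto
    then show ?thesis
      using that b b' by blast
  qed
  have "f b = b" "f b' = b'"
    using f_id assms(1) b(1,2) by auto
  then have "b = f x \<or> lt b (f x)" "b' = f x \<or> lt b' (f x)"
    using f_mono[of b x] f_mono[of b' x] b assms(2) by auto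
  moreover have "\<not> lt b' b"
    using not_lt_same_rank b(1,2) by auto
  ultimately have "lt b (f x) \<or> lt b' (f x)"
    using b(3) by auto
  moreover have "f x \<in> P"
    using f_into assms(2) Q_subset by blast
  ultimately show ?thesis
    using rank_strict_mono[of b "f x"] rank_strict_mono[of b' "f x"] b(1,2) by auto
qed

(* A situation shown to be impossible: p is an element of Q of least rank above level t, and its
   rank exceeds t + 1. *)
context
  fixes t m p
  assumes level_in_Q: "lev t \<subseteq> Q"
    and p_in_Q: "p \<in> Q" and rank_p: "r p = Suc m" and t_less_m: "t < m"
    and p_least: "\<And>q. q \<in> Q \<Longrightarrow> t < r q \<Longrightarrow> r p \<le> r q"
begin

lemma f_rank_ge_least: "x \<in> P \<Longrightarrow> t < r x \<Longrightarrow> Suc m \<le> r (f x)"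
  using p_least[OF f_into f_rank_gt[OF level_in_Q]] rank_p by simp

lemma f_eq_upper_cover:
  assumes "x \<in> lev m" "q \<in> Q" "r q = Suc m" "lt x q"
  shows "f x = q"
proof -
  have q_P: "q \<in> P"
    using assms(2) Q_subset by blast
  have "f x = q \<or> lt (f x) q"
    using f_mono[of x q] f_id[OF assms(2)] assms(1,4) q_P by auto
  moreover have "Suc m \<le> r (f x)"
    using f_rank_ge_least assms(1) t_less_m by simp
  then have "\<not> lt (f x) q"
    using rank_strict_mono[of "f x" q] f_into assms(1,3) Q_subset q_P by fastforce
  ultimately show ?thesis
    by blast
qed

lemma least_unique:
  assumes "q \<in> Q" "r q = Suc m"
  shows "q = p"
proof -
  have "p \<in> lev (Suc m)" "q \<in> lev (Suc m)"
    using assms p_in_Q rank_p Q_subset by auto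
  then obtain x where "x \<in> lev m" "lt x p" "lt x q"
    using common_lower_cover by blast
  then show ?thesis
    using f_eq_upper_cover p_in_Q rank_p assms by metis
qed

lemma rank_incomparable_to_least:
  assumes "q \<in> Q" "q \<noteq> p" "antichain lt {p, q}"
  shows "r q = Suc (Suc m)"
proof -
  have "\<not> lt p q" "\<not> lt q p"
    using assms(2,3) antichain_pair by metis+
  then have "r p \<le> Suc (r q)" "r q \<le> Suc (r p)"
    using rank_le_Suc_of_not_lt p_in_Q assms(1) Q_subset by blast+
  moreover from this have "Suc m \<le> r q"
    using p_least[OF assms(1)] rank_p t_less_m by simp
  moreover have "r q \<noteq> Suc m"
    using least_unique assms(1,2) by blast
  ultimately show ?thesis
    using rank_p by simp
qed

lemma f_eq_second_cover:
  assumes "x \<in> lev m" "q \<in> Q" "r q = Suc (Suc m)" "\<not> lt p q" "lt x q"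
  shows "f x = q"
proof (rule ccontr)
  assume "f x \<noteq> q"
  moreover have q_P: "q \<in> P"
    using assms(2) Q_subset by blast
  ultimately have below_q: "lt (f x) q"
    using f_mono[of x q] f_id[OF assms(2)] assms(1,5) by auto
  have fx_Q: "f x \<in> Q"
    using f_into assms(1) by simp
  then have "r (f x) < Suc (Suc m)"
    using rank_strict_mono[of "f x" q] below_q Q_subset q_P assms(3) by auto
  moreover have "Suc m \<le> r (f x)"
    using f_rank_ge_least assms(1) t_less_m by simp
  ultimately have "f x = p"
    using least_unique fx_Q by simp
  then show False
    using below_q assms(4) by simp
qed

lemma no_gap_above_level: False
proof -
  obtain q where q: "q \<in> Q" "q \<noteq> p" "antichain lt {p, q}"
    using partners p_in_Q unfolding has_incomparable_partners_def by blast
  have p_P: "p \<in> P" and q_P: "q \<in> P"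
    using p_in_Q q(1) Q_subset by auto
  have rank_q: "r q = Suc (Suc m)"
    using rank_incomparable_to_least[OF q] .
  have p_q: "\<not> lt p q"
    using q(2,3) antichain_pair by metis
  obtain x0 where x0: "x0 \<in> lev m" "\<not> lt x0 p"
    using unique_not_below[OF p_P rank_p] by blast
  have "lt x0 q"
    using lt_of_rank_gap x0(1) q_P rank_q by simp
  then have f_x0: "f x0 = q"
    using f_eq_second_cover x0(1) q(1) rank_q p_q by blast
  obtain u where u: "u \<in> lev (Suc m)" "lt x0 u"
    using two_above[of x0] x0(1) rank_bounded[OF q_P] rank_q by auto
  have "u \<noteq> p"
    using u(2) x0(2) by blast
  then have "lt u q"
    using lt_of_ne_not_below[of q "Suc m" p u] q_P rank_q p_P rank_p u(1) p_q by auto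
  obtain x1 where x1: "x1 \<in> lev m" "lt x1 u" "lt x1 p"
    using common_lower_cover[of u m p] u(1) p_P rank_p by auto
  have f_x1: "f x1 = p"
    using f_eq_upper_cover x1(1,3) p_in_Q rank_p by blast
  have fu_P: "f u \<in> P"
    using f_into u(1) Q_subset by blast
  (* f u lies between f x0 = q and f q = q, and above f x1 = p *)
  have "q = f u \<or> lt q (f u)" "f u = q \<or> lt (f u) q" "p = f u \<or> lt p (f u)"
    using f_mono[of x0 u] f_mono[of u q] f_mono[of x1 u] f_id[OF q(1)] f_x0 f_x1
      x0(1) x1 u \<open>lt u q\<close> q_P by auto
  then show False
    using trans[OF q_P fu_P q_P] not_lt_same_rank[OF q_P q_P] p_q q(2) by blast
qed

end

lemma next_level_meets_Q:
  assumes "lev t \<subseteq> Q" "t < n"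
  obtains y where "y \<in> Q" "r y = Suc t"
proof -
  obtain y0 where y0: "y0 \<in> lev (Suc t)"
    using level_nonempty[of "Suc t"] assms(2) by auto
  then have "f y0 \<in> Q" "t < r (f y0)"
    using f_into f_rank_gt[OF assms(1)] by auto
  then obtain p where p: "p \<in> Q" "t < r p" and p_least: "\<And>q. q \<in> Q \<Longrightarrow> t < r q \<Longrightarrow> r p \<le> r q"
    using ex_has_least_nat[of "\<lambda>q. q \<in> Q \<and> t < r q" "f y0" r] by blast
  show ?thesis
  proof (cases "r p = Suc t")
    case True
    then show ?thesis
      using that p(1) by blast
  next
    case False
    then obtain m where "r p = Suc m" "t < m"
      using p(2) by (cases "r p") auto
    then show ?thesis
      using no_gap_above_level[OF assms(1) p(1) _ _ p_least] by blast
  qed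
qed

lemma next_level_subset_Q:
  assumes "lev t \<subseteq> Q" "t < n"
  shows "lev (Suc t) \<subseteq> Q"
proof -
  obtain y where y: "y \<in> Q" "r y = Suc t"
    using next_level_meets_Q[OF assms] by blast
  have y_P: "y \<in> P"
    using y(1) Q_subset by blast
  obtain a where a: "a \<in> lev t" "\<not> lt a y"
    using unique_not_below[OF y_P y(2)] by blast
  have "\<not> lt y a"
    using not_lt_same_rank rank_strict_mono[of y a] a(1) y_P y(2) by auto
  then have "antichain lt {a, y}"
    using a(2) antichain_pair by metis
  moreover have "card (lev t) = 3"
    using card_level assms(2) by simp
  ultimately obtain B where B: "B \<subseteq> Q" "y \<in> B" "card B = 3" "antichain lt B"
    using antichain3_propagatesD[OF propagates assms(1) _ antichain_level a(1) y(1)] by blast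
  have "B \<subseteq> lev (Suc t)"
  proof
    fix z assume z: "z \<in> B"
    then have "r z = r y"
      using antichain3_same_rank[of B z y] B Q_subset by blast
    then show "z \<in> lev (Suc t)"
      using z B(1) Q_subset y(2) by auto
  qed
  moreover have "card (lev (Suc t)) = 3"
    using card_level assms(2) by simp
  moreover from this have "finite (lev (Suc t))"
    by (metis card.infinite zero_neq_numeral)
  ultimately have "B = lev (Suc t)"
    using B(3) card_subset_eq by metis
  then show ?thesis
    using B(1) by blast
qed

lemma levels_above_subset_Q:
  assumes "lev t \<subseteq> Q" "t \<le> k" "k \<le> n"
  shows "lev k \<subseteq> Q"
  using assms(2,3)
proof (induction k rule: dec_induct)
  case base
  show ?case
    by (rule assms(1))
next
  case (step k)
  then show ?case
    using next_level_subset_Q by simp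
qed

lemma Q_eq_P_of_level_subset:
  assumes "lev t \<subseteq> Q" "t \<le> n"
  shows "Q = P"
proof -
  interpret converse: crown_stack_retraction P "\<lambda>x y. lt y x" "\<lambda>x. n - r x" n Q f
    by (rule crown_stack_retraction_dual)
  have "x \<in> Q" if x: "x \<in> P" for x
  proof (cases "t \<le> r x")
    case True
    then show ?thesis
      using levels_above_subset_Q[OF assms(1) True rank_bounded[OF x]] x by blast
  next
    case False
    have "converse.lev (n - t) = lev t"
      using rank_bounded assms(2) by fastforce
    then have "converse.lev (n - r x) \<subseteq> Q"
      using converse.levels_above_subset_Q[of "n - t" "n - r x"] assms(1) False by simp
    moreover have "x \<in> converse.lev (n - r x)"
      using x by simp
    ultimately show ?thesis
      by blast
  qed
  then show ?thesis
    using Q_subset by blast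
qed

end

theorem lemma5p4:
  fixes P Q :: "'a set" and lt :: "'a \<Rightarrow> 'a \<Rightarrow> bool"
  assumes "six_stack P lt"
    and "retract P lt Q"
    and "iso_to_tower_of_sections Q lt"
    and "\<exists>i::nat. level P lt i \<noteq> {} \<and> level P lt i \<subseteq> Q"
  shows "Q = P"
proof -
  obtain n where stack: "crown_stack P lt (rank P lt) n"
    using six_stack_crown_stack[OF assms(1)] by blast
  obtain f where "Q \<subseteq> P" "\<forall>x\<in>P. f x \<in> Q" "\<forall>q\<in>Q. f q = q"
    "\<forall>x\<in>P. \<forall>y\<in>P. lt x y \<longrightarrow> f x = f y \<or> lt (f x) (f y)"
    using assms(2) unfolding retract_def by blast
  then interpret crown_stack_retraction P lt "rank P lt" n Q f
    using stack tower_has_incomparable_partners[OF assms(3)] tower_antichain3_propagates[OF assms(3)]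
    by (simp add: crown_stack_retraction_def crown_stack_retraction_axioms_def)
  obtain i where "lev i \<noteq> {}" "lev i \<subseteq> Q"
    using assms(4) level_eq by metis
  moreover from this have "i \<le> n"
    using rank_bounded by blast
  ultimately show ?thesis
    using Q_eq_P_of_level_subset by blast
qed

end
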